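(* Let $c>0$, $0<\lambda<T_M$, and let $f\in C^2(\mathbb R)$ solve $$f''(y)-cf'(y)-f^4(y)=-\int_{-\infty}^\infty E(y-\eta)f^4(\eta)\,d\eta\ (y\in\mathbb R),\qquad 0<\lambda\le f\le T_M.$$ Then $f$ is constant.
   Context: $E(x)=\frac12\int_{|x|}^\infty\frac{e^{-t}}{t}dt$. *)

theory Defs
  imports "HOL-Analysis.Analysis"
begin

text \<open>The kernel E(x) = 1/2 * integral from |x| to infinity of exp(-t)/t dt
  (Lebesgue integral; at x = 0 the integral diverges, a null set).\<close>
definition E :: "real \<Rightarrow> real" where
  "E x = (1/2) * (LINT t:{\<bar>x\<bar><..}|lborel. exp (- t) / t)"

end

theory Submission
  imports Defs "HOL-Probability.Distributions"
begin

text \<open>Write \<open>h = f\<^sup>4\<close>. The kernel \<open>E\<close> is an even probability density with finite first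
  moment, so \<open>0 \<le> h, E * h \<le> T\<^sup>4\<close> and \<open>f'' - c f'\<close> is bounded; as \<open>f\<close> is bounded, this bounds
  \<open>f'\<close> and then \<open>f''\<close>. Multiplying the equation by \<open>h\<close> and using
  \<open>h (E * h) \<le> (h\<^sup>2 + E * h\<^sup>2) / 2\<close> gives, with \<open>\<Phi> = f' h - c f\<^sup>5 / 5\<close>,
  \<open>\<integral>\<^bsub>-R..R\<^esub> 4 f\<^sup>3 f'\<^sup>2 \<le> \<Phi> R - \<Phi> (-R) - D(h\<^sup>2, R) / 2\<close>,
  where \<open>D(g, R) = \<integral>\<^bsub>-R..R\<^esub> (g - E * g)\<close> is bounded by \<open>2 sup \<bar>g\<bar> \<integral> \<bar>s\<bar> E(s) ds\<close>.
  Hence \<open>\<integral> f'\<^sup>2 < \<infinity>\<close>, and as \<open>f'\<close> is Lipschitz, \<open>f' \<rightarrow> 0\<close> at \<open>\<plusminus>\<infinity>\<close>. Since \<open>E\<close> is even,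
  \<open>D(g, R) \<rightarrow> 0\<close> whenever \<open>g' \<rightarrow> 0\<close> at \<open>\<plusminus>\<infinity>\<close>. For \<open>g = h\<close> the integrated equation then
  yields \<open>f R - f (-R) \<rightarrow> 0\<close>, hence \<open>\<Phi> R - \<Phi> (-R) \<rightarrow> 0\<close>; for \<open>g = h\<^sup>2\<close> the whole right-hand
  side above tends to \<open>0\<close>. So \<open>f\<^sup>3 f'\<^sup>2\<close> vanishes identically, and \<open>f' = 0\<close>.\<close>

lemma E_nonneg: "0 \<le> E x"
  unfolding E_def set_lebesgue_integral_def
  by (auto intro!: Bochner_Integration.integral_nonneg simp: indicator_def)

lemma E_minus [simp]: "E (- x) = E x"
  by (simp add: E_def)

lemma E_eq_integral_if: "E x = 1/2 * (LBINT t. (if \<bar>x\<bar> < t then 1 else 0) * (exp (- t) / t))"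
  unfolding E_def set_lebesgue_integral_def
  by (auto simp: indicator_def intro!: arg_cong[where f="\<lambda>x. _ * x"] Bochner_Integration.integral_cong)

lemma borel_measurable_E [measurable]: "E \<in> borel_measurable borel"
  unfolding E_eq_integral_if[abs_def] by measurable

lemma nn_integral_exp_minus_Ici: "(\<integral>\<^sup>+t\<in>{0..}. ennreal (exp (- t)) \<partial>lborel) = 1"
  using nn_intergal_power_times_exp_Ici[of 0] by simp

lemma nn_integral_times_exp_minus_Ici: "(\<integral>\<^sup>+t\<in>{0..}. ennreal (t * exp (- t)) \<partial>lborel) = 1"
  using nn_intergal_power_times_exp_Ici[of 1] by simp

lemma ennreal_E:
  assumes "x \<noteq> 0"
  shows "ennreal (E x)
    = ennreal (1/2) * (\<integral>\<^sup>+t. ennreal ((if \<bar>x\<bar> < t then 1 else 0) * (exp (- t) / t)) \<partial>lborel)"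
proof -
  let ?g = "\<lambda>t. (if \<bar>x\<bar> < t then 1 else 0) * (exp (- t) / t)"
  have g_nonneg: "0 \<le> ?g t" for t
    by (auto intro!: divide_nonneg_pos)
  have "(\<integral>\<^sup>+t. ennreal (norm (?g t)) \<partial>lborel)
      \<le> (\<integral>\<^sup>+t. indicator {0..} t * ennreal (exp (- t)) * ennreal (1 / \<bar>x\<bar>) \<partial>lborel)"
  proof (intro nn_integral_mono)
    fix t
    show "ennreal (norm (?g t)) \<le> indicator {0..} t * ennreal (exp (- t)) * ennreal (1 / \<bar>x\<bar>)"
    proof (cases "\<bar>x\<bar> < t")
      case True
      then have "exp (- t) / t \<le> exp (- t) * (1 / \<bar>x\<bar>)"
        using assms by (auto simp: field_simps intro!: mult_left_mono)
      with True show ?thesis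
        by (auto simp: ennreal_mult[symmetric] intro!: ennreal_leI)
    qed auto
  qed
  also have "\<dots> = (\<integral>\<^sup>+t\<in>{0..}. ennreal (exp (- t)) \<partial>lborel) * ennreal (1 / \<bar>x\<bar>)"
    by (subst nn_integral_multc) (auto simp: mult_ac)
  also have "\<dots> < \<infinity>"
    by (simp add: nn_integral_exp_minus_Ici)
  finally have "integrable lborel ?g"
    by (intro integrableI_bounded) auto
  then have "ennreal (LBINT t. ?g t) = (\<integral>\<^sup>+t. ennreal (?g t) \<partial>lborel)"
    using g_nonneg by (intro nn_integral_eq_integral[symmetric]) auto
  moreover have "ennreal (E x) = ennreal (1/2) * ennreal (LBINT t. ?g t)"
    unfolding E_eq_integral_if
    by (subst ennreal_mult) (auto intro!: Bochner_Integration.integral_nonneg g_nonneg)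
  ultimately show ?thesis
    by simp
qed

text \<open>Tonelli, applied to the definition of \<open>E\<close> as an integral over \<open>t > \<bar>x\<bar>\<close>.\<close>

lemma nn_integral_E_mult:
  assumes [measurable]: "w \<in> borel_measurable borel" and w_nonneg: "\<And>x. 0 \<le> w x"
  shows "(\<integral>\<^sup>+x. ennreal (E x * w x) \<partial>lborel) = ennreal (1/2) *
     (\<integral>\<^sup>+t. ennreal (exp (- t) / t) * (\<integral>\<^sup>+x. indicator {-t<..<t} x * ennreal (w x) \<partial>lborel) \<partial>lborel)"
proof -
  let ?k = "\<lambda>x t. ennreal ((if \<bar>x\<bar> < t then 1 else 0) * (exp (- t) / t)) * ennreal (w x)"
  have "(\<integral>\<^sup>+x. ennreal (E x * w x) \<partial>lborel) = (\<integral>\<^sup>+x. ennreal (1/2) * (\<integral>\<^sup>+t. ?k x t \<partial>lborel) \<partial>lborel)"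
    using AE_lborel_singleton[of 0]
    by (intro nn_integral_cong_AE, eventually_elim)
       (simp add: ennreal_mult E_nonneg w_nonneg ennreal_E nn_integral_multc mult.assoc)
  also have "\<dots> = ennreal (1/2) * (\<integral>\<^sup>+x. (\<integral>\<^sup>+t. ?k x t \<partial>lborel) \<partial>lborel)"
    by (rule nn_integral_cmult) measurable
  also have "(\<integral>\<^sup>+x. (\<integral>\<^sup>+t. ?k x t \<partial>lborel) \<partial>lborel) = (\<integral>\<^sup>+t. (\<integral>\<^sup>+x. ?k x t \<partial>lborel) \<partial>lborel)"
    by (rule lborel_pair.Fubini'[symmetric]) measurable
  also have "\<dots>
      = (\<integral>\<^sup>+t. ennreal (exp (- t) / t) * (\<integral>\<^sup>+x. indicator {-t<..<t} x * ennreal (w x) \<partial>lborel) \<partial>lborel)"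
  proof (rule nn_integral_cong)
    fix t :: real
    have "(\<integral>\<^sup>+x. ?k x t \<partial>lborel)
        = (\<integral>\<^sup>+x. ennreal (exp (- t) / t) * (indicator {-t<..<t} x * ennreal (w x)) \<partial>lborel)"
      by (intro nn_integral_cong) (auto simp: indicator_def abs_less_iff)
    then show "(\<integral>\<^sup>+x. ?k x t \<partial>lborel)
        = ennreal (exp (- t) / t) * (\<integral>\<^sup>+x. indicator {-t<..<t} x * ennreal (w x) \<partial>lborel)"
      by (simp add: nn_integral_cmult)
  qed
  finally show ?thesis .
qed

lemma emeasure_lborel_Ioo_symmetric:
  "emeasure lborel {-t<..<t} = ennreal (if 0 < t then 2 * t else 0)"
  by (cases "0 < t") auto

lemma nn_integral_E: "(\<integral>\<^sup>+x. ennreal (E x) \<partial>lborel) = 1"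
proof -
  have "(\<integral>\<^sup>+x. ennreal (E x) \<partial>lborel) = ennreal (1/2) *
     (\<integral>\<^sup>+t. ennreal (exp (- t) / t) * ennreal (if 0 < t then 2 * t else 0) \<partial>lborel)"
    using nn_integral_E_mult[of "\<lambda>_. 1"] by (simp add: emeasure_lborel_Ioo_symmetric)
  also have "(\<integral>\<^sup>+t. ennreal (exp (- t) / t) * ennreal (if 0 < t then 2 * t else 0) \<partial>lborel)
      = (\<integral>\<^sup>+t\<in>{0..}. ennreal (2 * exp (- t)) \<partial>lborel)"
    using AE_lborel_singleton[of 0]
    by (intro nn_integral_cong_AE, eventually_elim) (auto simp: ennreal_mult[symmetric] indicator_def)
  also have "\<dots> = ennreal 2 * (\<integral>\<^sup>+t\<in>{0..}. ennreal (exp (- t)) \<partial>lborel)"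
    by (subst nn_integral_cmult[symmetric])
       (auto simp: indicator_def ennreal_mult' mult.left_commute intro!: nn_integral_cong)
  finally show ?thesis
    by (simp del: ennreal_half ennreal_numeral add: nn_integral_exp_minus_Ici ennreal_mult[symmetric])
qed

lemma integrable_E: "integrable lborel E"
  by (rule integrableI_nn_integral_finite[where x=1]) (auto simp: E_nonneg nn_integral_E)

lemma integral_E [simp]: "(LBINT x. E x) = 1"
  using nn_integral_eq_integral[OF integrable_E] nn_integral_E
    Bochner_Integration.integral_nonneg[of lborel E]
  by (simp add: E_nonneg)

lemma integrable_abs_times_E: "integrable lborel (\<lambda>x. \<bar>x\<bar> * E x)"
proof (rule integrableI_bounded)
  have "(\<integral>\<^sup>+x. indicator {-t<..<t} x * ennreal \<bar>x\<bar> \<partial>lborel) \<le> ennreal t * ennreal (if 0 < t then 2 * t else 0)"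
    for t :: real
  proof -
    have "(\<integral>\<^sup>+x. indicator {-t<..<t} x * ennreal \<bar>x\<bar> \<partial>lborel)
        \<le> (\<integral>\<^sup>+x. ennreal t * indicator {-t<..<t} x \<partial>lborel)"
      by (intro nn_integral_mono) (auto simp: indicator_def intro!: ennreal_leI)
    then show ?thesis
      by (simp add: nn_integral_cmult emeasure_lborel_Ioo_symmetric)
  qed
  then have "(\<integral>\<^sup>+x. ennreal (E x * \<bar>x\<bar>) \<partial>lborel)
      \<le> ennreal (1/2) *
        (\<integral>\<^sup>+t. ennreal (exp (- t) / t) * (ennreal t * ennreal (if 0 < t then 2 * t else 0)) \<partial>lborel)"
    by (subst nn_integral_E_mult) (auto intro!: mult_left_mono nn_integral_mono)
  also have "(\<integral>\<^sup>+t. ennreal (exp (- t) / t) * (ennreal t * ennreal (if 0 < t then 2 * t else 0)) \<partial>lborel)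
      = (\<integral>\<^sup>+t\<in>{0..}. ennreal (2 * (t * exp (- t))) \<partial>lborel)"
    using AE_lborel_singleton[of 0]
    by (intro nn_integral_cong_AE, eventually_elim) (auto simp: ennreal_mult[symmetric] indicator_def)
  also have "\<dots> = ennreal 2 * (\<integral>\<^sup>+t\<in>{0..}. ennreal (t * exp (- t)) \<partial>lborel)"
    by (subst nn_integral_cmult[symmetric])
       (auto simp: indicator_def ennreal_mult' mult.left_commute intro!: nn_integral_cong)
  finally have "(\<integral>\<^sup>+x. ennreal (E x * \<bar>x\<bar>) \<partial>lborel) \<le> 1"
    by (simp del: ennreal_half ennreal_numeral add: nn_integral_times_exp_minus_Ici ennreal_mult[symmetric])
  then show "(\<integral>\<^sup>+x. ennreal (norm (\<bar>x\<bar> * E x)) \<partial>lborel) < \<infinity>"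
    by (simp add: E_nonneg abs_mult mult.commute le_less_trans)
qed measurable

lemma integrable_times_E: "integrable lborel (\<lambda>x. x * E x)"
  by (rule Bochner_Integration.integrable_bound[OF integrable_abs_times_E]) (auto simp: abs_mult E_nonneg)

lemma integral_times_E: "(LBINT x. x * E x) = 0"
proof -
  have "(LBINT x. x * E x) = \<bar>-1\<bar> *\<^sub>R (LBINT x. (0 + (-1) * x) * E (0 + (-1) * x))"
    by (rule lborel_integral_real_affine) simp
  then show ?thesis
    by simp
qed

definition conv_E :: "(real \<Rightarrow> real) \<Rightarrow> real \<Rightarrow> real" where
  "conv_E g y = (LBINT s. E s * g (y - s))"

lemma conv_E_eq: "(LBINT \<eta>. E (y - \<eta>) * g \<eta>) = conv_E g y"
  using lborel_integral_real_affine[of "-1" "\<lambda>\<eta>. E (y - \<eta>) * g \<eta>" y] by (simp add: conv_E_def)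

lemma integrable_E_mult_bounded:
  assumes [measurable]: "\<phi> \<in> borel_measurable borel" and bound: "\<And>s. \<bar>\<phi> s\<bar> \<le> K"
  shows "integrable lborel (\<lambda>s. E s * \<phi> s)"
proof (rule Bochner_Integration.integrable_bound)
  show "integrable lborel (\<lambda>s. K * E s)"
    by (intro integrable_mult_right integrable_E)
  have "E s * \<bar>\<phi> s\<bar> \<le> E s * \<bar>K\<bar>" for s
    using bound[of s] by (intro mult_left_mono E_nonneg) linarith
  then show "AE s in lborel. norm (E s * \<phi> s) \<le> norm (K * E s)"
    by (simp add: abs_mult E_nonneg mult.commute)
qed measurable

lemma integrable_E_mult_linear_growth:
  assumes [measurable]: "\<phi> \<in> borel_measurable borel" and growth: "\<And>s. \<bar>\<phi> s\<bar> \<le> K * \<bar>s\<bar>"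
  shows "integrable lborel (\<lambda>s. E s * \<phi> s)"
proof (rule Bochner_Integration.integrable_bound)
  show "integrable lborel (\<lambda>s. K * (\<bar>s\<bar> * E s))"
    by (intro integrable_mult_right integrable_abs_times_E)
  have "0 \<le> K"
    using growth[of 1] by simp
  have "E s * \<bar>\<phi> s\<bar> \<le> E s * (K * \<bar>s\<bar>)" for s
    using growth[of s] by (intro mult_left_mono E_nonneg)
  then show "AE s in lborel. norm (E s * \<phi> s) \<le> norm (K * (\<bar>s\<bar> * E s))"
    using \<open>0 \<le> K\<close> by (simp add: abs_mult E_nonneg mult_ac)
qed measurable

lemma abs_integral_E_mult_le:
  assumes [measurable]: "\<phi> \<in> borel_measurable borel" and growth: "\<And>s. \<bar>\<phi> s\<bar> \<le> K * \<bar>s\<bar>"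
  shows "\<bar>LBINT s. E s * \<phi> s\<bar> \<le> K * (LBINT s. \<bar>s\<bar> * E s)"
proof -
  have "\<bar>LBINT s. E s * \<phi> s\<bar> \<le> (LBINT s. K * (\<bar>s\<bar> * E s))"
  proof (rule integral_abs_bound_integral)
    show "integrable lborel (\<lambda>s. E s * \<phi> s)"
      using assms by (rule integrable_E_mult_linear_growth)
    show "integrable lborel (\<lambda>s. K * (\<bar>s\<bar> * E s))"
      by (intro integrable_mult_right integrable_abs_times_E)
    show "\<bar>E s * \<phi> s\<bar> \<le> K * (\<bar>s\<bar> * E s)" for s
      using mult_left_mono[OF growth[of s] E_nonneg[of s]] by (simp add: abs_mult E_nonneg mult_ac)
  qed
  then show ?thesis
    by simp
qed

lemma integrable_conv_E:
  assumes "g \<in> borel_measurable borel" and "\<And>x. \<bar>g x\<bar> \<le> B"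
  shows "integrable lborel (\<lambda>s. E s * g (y - s))"
  using assms by (intro integrable_E_mult_bounded) auto

lemma conv_E_le:
  assumes "g \<in> borel_measurable borel" and "\<And>x. \<bar>g x\<bar> \<le> B" and "\<And>x. g x \<le> U"
  shows "conv_E g y \<le> U"
proof -
  have "conv_E g y \<le> (LBINT s. U * E s)"
    unfolding conv_E_def
  proof (rule integral_mono)
    show "E s * g (y - s) \<le> U * E s" for s
      using mult_left_mono[OF assms(3) E_nonneg, of s "y - s"] by (simp add: mult.commute)
  qed (auto intro: integrable_conv_E[OF assms(1,2)] integrable_mult_right integrable_E)
  then show ?thesis
    by simp
qed

lemma conv_E_ge:
  assumes "g \<in> borel_measurable borel" and "\<And>x. \<bar>g x\<bar> \<le> B" and "\<And>x. U \<le> g x"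
  shows "U \<le> conv_E g y"
proof -
  have "(LBINT s. U * E s) \<le> conv_E g y"
    unfolding conv_E_def
  proof (rule integral_mono)
    show "U * E s \<le> E s * g (y - s)" for s
      using mult_left_mono[OF assms(3) E_nonneg, of s "y - s"] by (simp add: mult.commute)
  qed (auto intro: integrable_conv_E[OF assms(1,2)] integrable_mult_right integrable_E)
  then show ?thesis
    by simp
qed

lemma abs_conv_E_le:
  assumes "g \<in> borel_measurable borel" and "\<And>x. \<bar>g x\<bar> \<le> B"
  shows "\<bar>conv_E g y\<bar> \<le> B"
proof -
  have "g x \<le> B" and "- B \<le> g x" for x
    using assms(2)[of x] by linarith+
  then have "conv_E g y \<le> B" and "- B \<le> conv_E g y"
    by (auto intro!: conv_E_le[OF assms] conv_E_ge[OF assms])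
  then show ?thesis
    by simp
qed

lemma mult_conv_E_le:
  assumes [measurable]: "g \<in> borel_measurable borel" and bound: "\<And>x. \<bar>g x\<bar> \<le> B"
  shows "a * conv_E g y \<le> (a\<^sup>2 + conv_E (\<lambda>x. (g x)\<^sup>2) y) / 2"
proof -
  have sq_bound: "\<bar>(g x)\<^sup>2\<bar> \<le> B\<^sup>2" for x
    using power_mono[OF bound abs_ge_zero, of x 2] by simp
  have int_g: "integrable lborel (\<lambda>s. E s * g (y - s))"
    using assms by (rule integrable_conv_E)
  have int_sq: "integrable lborel (\<lambda>s. E s * (g (y - s))\<^sup>2)"
    using sq_bound by (intro integrable_conv_E) auto
  have "a * conv_E g y = (LBINT s. a * (E s * g (y - s)))"
    by (simp add: conv_E_def)
  also have "\<dots> \<le> (LBINT s. (a\<^sup>2 / 2) * E s + (1/2) * (E s * (g (y - s))\<^sup>2))"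
  proof (rule integral_mono)
    fix s
    have "a * g (y - s) \<le> (a\<^sup>2 + (g (y - s))\<^sup>2) / 2"
      using sum_squares_bound[of a "g (y - s)"] by (simp add: power2_eq_square)
    from mult_left_mono[OF this E_nonneg[of s]]
    show "a * (E s * g (y - s)) \<le> (a\<^sup>2 / 2) * E s + (1/2) * (E s * (g (y - s))\<^sup>2)"
      by (simp add: field_simps)
  next
    show "integrable lborel (\<lambda>s. a * (E s * g (y - s)))"
      using int_g by (rule integrable_mult_right)
    show "integrable lborel (\<lambda>s. (a\<^sup>2 / 2) * E s + (1/2) * (E s * (g (y - s))\<^sup>2))"
      by (intro Bochner_Integration.integrable_add integrable_mult_right integrable_E int_sq)
  qed
  also have "\<dots> = (a\<^sup>2 + conv_E (\<lambda>x. (g x)\<^sup>2) y) / 2"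
    using int_sq by (simp add: conv_E_def integrable_E field_simps)
  finally show ?thesis .
qed

lemma
  assumes [measurable]: "g \<in> borel_measurable borel" and bound: "\<And>x. \<bar>g x\<bar> \<le> B"
  shows set_integrable_conv_E: "set_integrable lborel {a..b} (conv_E g)"
    and set_integral_conv_E:
      "(LINT y:{a..b}|lborel. conv_E g y) = (LBINT s. E s * (LINT y:{a..b}|lborel. g (y - s)))"
proof -
  define F where "F = (\<lambda>y s. indicator {a..b} y * (E s * g (y - s)))"
  have F_measurable[measurable]: "case_prod F \<in> borel_measurable (lborel \<Otimes>\<^sub>M lborel)"
    unfolding F_def by measurable
  have abs_bound: "\<bar>\<bar>g x\<bar>\<bar> \<le> B" for x
    using bound by simp
  have integrable_F: "integrable (lborel \<Otimes>\<^sub>M lborel) (case_prod F)"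
  proof (rule lborel_pair.Fubini_integrable)
    show "AE y in lborel. integrable lborel (\<lambda>s. case_prod F (y, s))"
      unfolding F_def by (auto intro!: integrable_mult_right integrable_conv_E[OF _ bound])
    show "integrable lborel (\<lambda>y. LBINT s. norm (case_prod F (y, s)))"
    proof (rule Bochner_Integration.integrable_bound)
      show "integrable lborel (\<lambda>y. indicator {a..b} y * B)"
        using borel_integrable_compact[of "{a..b}" "\<lambda>_. B"] by (simp add: mult.commute)
      show "(\<lambda>y. LBINT s. norm (case_prod F (y, s))) \<in> borel_measurable lborel"
        using F_measurable by measurable
      have "(LBINT s. norm (F y s)) = indicator {a..b} y * conv_E (\<lambda>x. \<bar>g x\<bar>) y" for y
        by (simp add: F_def conv_E_def abs_mult E_nonneg indicator_def)
      moreover have "\<bar>conv_E (\<lambda>x. \<bar>g x\<bar>) y\<bar> \<le> B" for y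
        using abs_bound by (intro abs_conv_E_le) auto
      ultimately have "norm (LBINT s. norm (F y s)) \<le> norm (indicator {a..b} y * B)" for y
        by (auto simp: indicator_def intro: order_trans[OF _ abs_ge_self])
      then show "AE y in lborel. norm (LBINT s. norm (case_prod F (y, s))) \<le> norm (indicator {a..b} y * B)"
        by simp
    qed
  qed (rule F_measurable)
  have fst_eq: "(\<lambda>y. LBINT s. F y s) = (\<lambda>y. indicator {a..b} y *\<^sub>R conv_E g y)"
    by (auto simp: fun_eq_iff indicator_def F_def conv_E_def)
  have snd_eq: "(\<lambda>s. LBINT y. F y s) = (\<lambda>s. E s * (LINT y:{a..b}|lborel. g (y - s)))"
    by (auto simp: fun_eq_iff mult_ac F_def set_lebesgue_integral_def)
  show "set_integrable lborel {a..b} (conv_E g)"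
    unfolding set_integrable_def using lborel_pair.integrable_fst'[OF integrable_F] fst_eq
    by (simp add: case_prod_beta)
  show "(LINT y:{a..b}|lborel. conv_E g y) = (LBINT s. E s * (LINT y:{a..b}|lborel. g (y - s)))"
    using lborel_pair.Fubini_integral[OF integrable_F] fst_eq snd_eq
    unfolding set_lebesgue_integral_def by simp
qed

lemma exists_antiderivative:
  fixes g :: "real \<Rightarrow> real"
  assumes "continuous_on UNIV g"
  shows "\<exists>G. \<forall>x. (G has_real_derivative g x) (at x)"
proof (intro exI allI)
  fix x :: real
  let ?G = "\<lambda>u. interval_lebesgue_integral lborel (ereal 0) (ereal u) g"
  have "(?G has_vector_derivative g x) (at x within {- \<bar>x\<bar> - 1..\<bar>x\<bar> + 1})"
    by (rule interval_integral_FTC2) (auto intro: continuous_on_subset[OF assms])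
  then have "(?G has_vector_derivative g x) (at x within {- \<bar>x\<bar> - 1<..<\<bar>x\<bar> + 1})"
    by (rule has_vector_derivative_within_subset) auto
  then have "(?G has_vector_derivative g x) (at x)"
    by (subst (asm) has_vector_derivative_within_open) auto
  then show "(?G has_real_derivative g x) (at x)"
    by (simp add: has_real_derivative_iff_has_vector_derivative)
qed

lemma set_integral_Icc_antiderivative:
  fixes g G :: "real \<Rightarrow> real"
  assumes "a \<le> b" and "\<And>x. (G has_real_derivative g x) (at x)" and "continuous_on UNIV g"
  shows "(LINT y:{a..b}|lborel. g y) = G b - G a"
proof -
  have "(LBINT y=a..b. g y) = G b - G a"
    using assms
    by (intro interval_integral_FTC_finite)
       (auto intro: continuous_on_subset has_field_derivative_at_within
             simp: has_real_derivative_iff_has_vector_derivative[symmetric])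
  then show ?thesis
    using interval_integral_Icc[OF \<open>a \<le> b\<close>, of g] by simp
qed

lemma set_integrable_Icc_continuous:
  fixes g :: "real \<Rightarrow> real"
  assumes "continuous_on UNIV g"
  shows "set_integrable lborel {a..b} g"
  unfolding set_integrable_def
  using borel_integrable_compact[of "{a..b}" g] assms by (auto intro: continuous_on_subset)

lemma MVT_between:
  fixes F F' :: "real \<Rightarrow> real"
  assumes "\<And>x. (F has_real_derivative F' x) (at x)"
  shows "\<exists>\<xi>. \<bar>\<xi> - x\<bar> \<le> \<bar>x - x'\<bar> \<and> F x - F x' = (x - x') * F' \<xi>"
proof (cases x x' rule: linorder_cases)
  case less
  then obtain z where "x < z" "z < x'" "F x' - F x = (x' - x) * F' z"
    using MVT2[of x x' F F'] assms by blast
  then show ?thesis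
    by (intro exI[of _ z]) (auto simp: algebra_simps)
next
  case greater
  then obtain z where "x' < z" "z < x" "F x - F x' = (x - x') * F' z"
    using MVT2[of x' x F F'] assms by blast
  then show ?thesis
    by (intro exI[of _ z]) (auto simp: algebra_simps)
qed auto

lemma DERIV_bounded_imp_lipschitz:
  fixes G g :: "real \<Rightarrow> real"
  assumes "\<And>x. (G has_real_derivative g x) (at x)" and "\<And>x. \<bar>g x\<bar> \<le> B"
  shows "\<bar>G x - G y\<bar> \<le> B * \<bar>x - y\<bar>"
  using field_differentiable_bound[of UNIV G g B x y] assms by auto

lemma DERIV_nonneg_imp_mono:
  fixes Q q :: "real \<Rightarrow> real"
  assumes "\<And>x. (Q has_real_derivative q x) (at x)" and "\<And>x. 0 \<le> q x"
  shows "mono Q"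
proof (rule monoI)
  fix x y :: real
  assume "x \<le> y"
  then show "Q x \<le> Q y"
    by (rule DERIV_nonneg_imp_nondecreasing) (use assms in \<open>intro exI conjI\<close>)
qed

lemma tendsto_at_infinity_reflect:
  fixes u :: "real \<Rightarrow> 'a::topological_space"
  assumes "(u \<longlongrightarrow> l) at_infinity"
  shows "((\<lambda>R. u (- R)) \<longlongrightarrow> l) at_top"
  using filterlim_compose[OF tendsto_mono[OF at_bot_le_at_infinity assms] filterlim_uminus_at_bot_at_top] .

lemma damped_deriv_le:
  fixes f f' f'' :: "real \<Rightarrow> real"
  assumes f: "\<And>y. (f has_real_derivative f' y) (at y)"
    and f': "\<And>y. (f' has_real_derivative f'' y) (at y)"
    and "0 < c" and damped: "\<And>y. \<bar>f'' y - c * f' y\<bar> \<le> B"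
    and bounded: "\<And>y. L \<le> f y \<and> f y \<le> U"
  shows "f' y0 \<le> B / c"
proof (rule ccontr)
  assume "\<not> f' y0 \<le> B / c"
  define a where "a = f' y0 - B / c"
  have "0 < a" and "0 \<le> B / c"
    using \<open>\<not> f' y0 \<le> B / c\<close> damped[of 0] \<open>0 < c\<close> by (auto simp: a_def)
  \<comment> \<open>The weight \<open>exp (- c y)\<close> makes \<open>f' - B / c\<close> grow, so \<open>f'\<close> stays above \<open>a\<close> to the right of \<open>y0\<close>.\<close>
  define \<phi> where "\<phi> y = exp (- c * y) * (f' y - B / c)" for y
  have "(\<phi> has_real_derivative exp (- c * y) * (f'' y - c * f' y + B)) (at y)" for y
    unfolding \<phi>_def using \<open>0 < c\<close>
    by (auto intro!: derivative_eq_intros f' simp: field_simps)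
  moreover have "0 \<le> exp (- c * y) * (f'' y - c * f' y + B)" for y
    using damped[of y] by (intro mult_nonneg_nonneg) auto
  ultimately have "mono \<phi>"
    by (rule DERIV_nonneg_imp_mono)
  have f'_ge: "a \<le> f' y" if "y0 \<le> y" for y
  proof -
    have "exp (- c * y) * a \<le> exp (- c * y0) * a"
      using \<open>0 < a\<close> \<open>0 < c\<close> that by (intro mult_right_mono) auto
    also have "\<dots> \<le> exp (- c * y) * (f' y - B / c)"
      using monoD[OF \<open>mono \<phi>\<close> that] by (simp add: \<phi>_def a_def)
    finally show ?thesis
      using \<open>0 \<le> B / c\<close> by simp
  qed
  define t where "t = y0 + (U - L + 1) / a"
  have "y0 < t"
    using bounded[of 0] \<open>0 < a\<close> by (auto simp: t_def)
  then obtain z where "y0 < z" and z: "f t - f y0 = (t - y0) * f' z"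
    using MVT2[of y0 t f f'] f by blast
  have "(t - y0) * a \<le> (t - y0) * f' z"
    using \<open>y0 < t\<close> f'_ge[of z] \<open>y0 < z\<close> by (intro mult_left_mono) auto
  then have "U - L + 1 \<le> f t - f y0"
    using \<open>0 < a\<close> z by (simp add: t_def)
  then show False
    using bounded[of y0] bounded[of t] by linarith
qed

lemma abs_damped_deriv_le:
  fixes f f' f'' :: "real \<Rightarrow> real"
  assumes f: "\<And>y. (f has_real_derivative f' y) (at y)"
    and f': "\<And>y. (f' has_real_derivative f'' y) (at y)"
    and c: "0 < c" and damped: "\<And>y. \<bar>f'' y - c * f' y\<bar> \<le> B"
    and bounded: "\<And>y. L \<le> f y \<and> f y \<le> U"
  shows "\<bar>f' y\<bar> \<le> B / c"
proof -
  have "f' y \<le> B / c"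
    using assms by (rule damped_deriv_le)
  moreover have "- f' y \<le> B / c"
  proof (rule damped_deriv_le[where f="\<lambda>y. - f y" and f'="\<lambda>y. - f' y" and f''="\<lambda>y. - f'' y"
        and L="- U" and U="- L"])
    show "((\<lambda>y. - f y) has_real_derivative - f' y) (at y)"
      and "((\<lambda>y. - f' y) has_real_derivative - f'' y) (at y)" for y
      using f[of y] f'[of y] by (auto intro: DERIV_minus)
    show "\<bar>- f'' y - c * - f' y\<bar> \<le> B" and "- U \<le> - f y \<and> - f y \<le> - L" for y
      using damped[of y] bounded[of y] by auto
  qed fact
  ultimately show ?thesis
    by simp
qed

lemma dissipation_window:
  fixes u Q q :: "real \<Rightarrow> real"
  assumes lip: "\<And>x y. \<bar>u x - u y\<bar> \<le> L * \<bar>x - y\<bar>" and "0 < L"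
    and Q: "\<And>x. (Q has_real_derivative q x) (at x)" and q: "\<And>x. k * (u x)\<^sup>2 \<le> q x" and "0 \<le> k"
    and "0 < \<epsilon>" and "\<epsilon> \<le> \<bar>u y\<bar>"
  shows "\<epsilon> / L * (k * (\<epsilon> / 2)\<^sup>2) \<le> Q (y + \<epsilon> / (2 * L)) - Q (y - \<epsilon> / (2 * L))"
proof -
  define w where "w = \<epsilon> / (2 * L)"
  have "0 < w"
    using \<open>0 < \<epsilon>\<close> \<open>0 < L\<close> by (simp add: w_def)
  then obtain z where z: "\<bar>z - y\<bar> < w" and Q_diff: "Q (y + w) - Q (y - w) = (2 * w) * q z"
    using MVT2[of "y - w" "y + w" Q q] Q by (force simp: abs_less_iff)
  have "\<bar>u z - u y\<bar> \<le> L * w"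
    using order_trans[OF lip[of z y] mult_left_mono[of "\<bar>z - y\<bar>" w L]] z \<open>0 < L\<close> by simp
  moreover have "\<bar>u y\<bar> - \<bar>u z\<bar> \<le> \<bar>u z - u y\<bar>"
    using abs_triangle_ineq2[of "u y" "u z"] by (simp add: abs_minus_commute)
  ultimately have "\<epsilon> / 2 \<le> \<bar>u z\<bar>"
    using \<open>0 < L\<close> \<open>\<epsilon> \<le> \<bar>u y\<bar>\<close> by (simp add: w_def)
  then have "(\<epsilon> / 2)\<^sup>2 \<le> (u z)\<^sup>2"
    using \<open>0 < \<epsilon>\<close> power_mono[of "\<epsilon> / 2" "\<bar>u z\<bar>" 2] by simp
  then have "k * (\<epsilon> / 2)\<^sup>2 \<le> q z"
    using order_trans[OF mult_left_mono[OF _ \<open>0 \<le> k\<close>] q[of z]] by blast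
  then have "(2 * w) * (k * (\<epsilon> / 2)\<^sup>2) \<le> Q (y + w) - Q (y - w)"
    using \<open>0 < w\<close> Q_diff by simp
  then show ?thesis
    using \<open>0 < L\<close> by (simp add: w_def)
qed

lemma bdd_range_if_mono_symmetric_bounded:
  fixes Q :: "real \<Rightarrow> real"
  assumes "mono Q" and bounded: "\<And>R. 0 \<le> R \<Longrightarrow> Q R - Q (- R) \<le> C"
  shows "bdd_above (range Q)" and "bdd_below (range Q)"
proof -
  have mono_abs: "Q (- \<bar>x\<bar>) \<le> Q x \<and> Q x \<le> Q \<bar>x\<bar> \<and> Q (- \<bar>x\<bar>) \<le> Q 0 \<and> Q 0 \<le> Q \<bar>x\<bar>" for x
    by (auto intro: monoD[OF \<open>mono Q\<close>])
  have "Q x \<le> Q 0 + C" and "Q 0 - C \<le> Q x" for x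
    using mono_abs[of x] bounded[OF abs_ge_zero, of x] by linarith+
  then show "bdd_above (range Q)" and "bdd_below (range Q)"
    by (metis bdd_aboveI2 bdd_belowI2)+
qed

text \<open>A variant of Barbalat's lemma: \<open>Q\<close> is an antiderivative of \<open>q \<ge> k u\<^sup>2\<close>, so the
  hypothesis bounds \<open>\<integral> u\<^sup>2\<close>.\<close>

lemma tendsto_0_if_bounded_dissipation:
  fixes u Q q :: "real \<Rightarrow> real"
  assumes lip: "\<And>x y. \<bar>u x - u y\<bar> \<le> L * \<bar>x - y\<bar>" and "0 < L"
    and Q: "\<And>x. (Q has_real_derivative q x) (at x)" and q: "\<And>x. k * (u x)\<^sup>2 \<le> q x" and "0 < k"
    and bounded: "\<And>R. 0 \<le> R \<Longrightarrow> Q R - Q (- R) \<le> C"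
  shows "(u \<longlongrightarrow> 0) at_infinity"
proof (rule tendstoI)
  fix \<epsilon> :: real
  assume "0 < \<epsilon>"
  have "0 \<le> q x" for x
    using order_trans[OF mult_nonneg_nonneg q[of x]] \<open>0 < k\<close> by simp
  with Q have "mono Q"
    by (rule DERIV_nonneg_imp_mono)
  note bdd = bdd_range_if_mono_symmetric_bounded[OF this bounded]
  define \<delta> where "\<delta> = \<epsilon> / L * (k * (\<epsilon> / 2)\<^sup>2)"
  define w where "w = \<epsilon> / (2 * L)"
  have "0 < \<delta>" and "0 < w"
    using \<open>0 < \<epsilon>\<close> \<open>0 < L\<close> \<open>0 < k\<close> by (simp_all add: \<delta>_def w_def)
  obtain x0 where x0: "Sup (range Q) - \<delta> < Q x0"
    using less_cSup_iff[OF _ bdd(1), of "Sup (range Q) - \<delta>"] \<open>0 < \<delta>\<close> by auto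
  obtain x1 where x1: "Q x1 < Inf (range Q) + \<delta>"
    using cInf_less_iff[OF _ bdd(2), of "Inf (range Q) + \<delta>"] \<open>0 < \<delta>\<close> by auto
  show "\<forall>\<^sub>F y in at_infinity. dist (u y) 0 < \<epsilon>"
    unfolding eventually_at_infinity
  proof (intro exI allI impI)
    fix y :: real
    assume y: "max \<bar>x0\<bar> \<bar>x1\<bar> + w \<le> norm y"
    show "dist (u y) 0 < \<epsilon>"
    proof (rule ccontr)
      assume "\<not> dist (u y) 0 < \<epsilon>"
      then have window: "\<delta> \<le> Q (y + w) - Q (y - w)"
        using dissipation_window[OF lip \<open>0 < L\<close> Q q] \<open>0 < k\<close> \<open>0 < \<epsilon>\<close> by (simp add: \<delta>_def w_def)
      have "Q (y + w) \<le> Sup (range Q)" and "Inf (range Q) \<le> Q (y - w)"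
        using bdd by (auto intro: cSup_upper cInf_lower)
      moreover have "x0 \<le> y - w \<or> y + w \<le> x1"
        using y by (cases "0 \<le> y") auto
      then have "Q x0 \<le> Q (y - w) \<or> Q (y + w) \<le> Q x1"
        using monoD[OF \<open>mono Q\<close>] by blast
      ultimately show False
        using window x0 x1 by linarith
    qed
  qed
qed

lemma eq_0_if_vanishing_dissipation:
  fixes u Q q \<psi> :: "real \<Rightarrow> real"
  assumes Q: "\<And>x. (Q has_real_derivative q x) (at x)" and q: "\<And>x. k * (u x)\<^sup>2 \<le> q x" and "0 < k"
    and vanishing: "\<And>R. 0 \<le> R \<Longrightarrow> Q R - Q (- R) \<le> \<psi> R" and "(\<psi> \<longlongrightarrow> 0) at_top"
  shows "u y = 0"
proof -
  have "0 \<le> q x" for x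
    using order_trans[OF mult_nonneg_nonneg q[of x]] \<open>0 < k\<close> by simp
  with Q have "mono Q"
    by (rule DERIV_nonneg_imp_mono)
  have symmetric_le: "Q R - Q (- R) \<le> 0" if "0 \<le> R" for R
  proof (rule tendsto_lowerbound[OF \<open>(\<psi> \<longlongrightarrow> 0) at_top\<close>])
    have bound: "Q R - Q (- R) \<le> \<psi> R'" if "R \<le> R'" for R'
      using vanishing[of R'] monoD[OF \<open>mono Q\<close>, of R R'] monoD[OF \<open>mono Q\<close>, of "- R'" "- R"]
        \<open>0 \<le> R\<close> that by simp
    show "\<forall>\<^sub>F R' in at_top. Q R - Q (- R) \<le> \<psi> R'"
      using eventually_ge_at_top[of R] by (rule eventually_mono) (rule bound)
  qed simp
  have mono_abs: "Q (- \<bar>x\<bar>) \<le> Q x \<and> Q x \<le> Q \<bar>x\<bar> \<and> Q (- \<bar>x\<bar>) \<le> Q 0 \<and> Q 0 \<le> Q \<bar>x\<bar>" for x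
    by (auto intro: monoD[OF \<open>mono Q\<close>])
  have "Q x = Q 0" for x
    using mono_abs[of x] symmetric_le[OF abs_ge_zero, of x] by linarith
  then have "(Q has_real_derivative 0) (at y)"
    by (metis DERIV_const ext)
  then have "q y = 0"
    using DERIV_unique[OF Q] by blast
  then have "k * (u y)\<^sup>2 \<le> 0"
    using q[of y] by simp
  then show ?thesis
    using \<open>0 < k\<close> by (simp add: mult_le_0_iff)
qed

text \<open>\<open>conv_E_defect g R\<close> is the mass that convolution with \<open>E\<close> moves across the boundary
  of \<open>[-R, R]\<close>.\<close>

definition conv_E_defect :: "(real \<Rightarrow> real) \<Rightarrow> real \<Rightarrow> real" where
  "conv_E_defect g R = (LINT y:{-R..R}|lborel. g y) - (LINT y:{-R..R}|lborel. conv_E g y)"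

lemma conv_E_defect_eq:
  fixes g G :: "real \<Rightarrow> real"
  assumes cont: "continuous_on UNIV g" and bound: "\<And>x. \<bar>g x\<bar> \<le> B"
    and G: "\<And>x. (G has_real_derivative g x) (at x)" and "0 \<le> R"
  shows "conv_E_defect g R = (LBINT s. E s * ((G R - G (- R)) - (G (R - s) - G (- R - s))))"
proof -
  have [measurable]: "g \<in> borel_measurable borel" "G \<in> borel_measurable borel"
    using cont DERIV_continuous_on[of UNIV G g] G by (auto intro: borel_measurable_continuous_onI)
  have shifted: "(LINT y:{-R..R}|lborel. g (y - s)) = G (R - s) - G (- R - s)" for s
  proof (rule set_integral_Icc_antiderivative)
    show "((\<lambda>y. G (y - s)) has_real_derivative g (y - s)) (at y)" for y
      using DERIV_chain2[OF G DERIV_diff[OF DERIV_ident DERIV_const]] by simp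
    show "continuous_on UNIV (\<lambda>y. g (y - s))"
      by (rule continuous_on_compose2[OF cont]) (auto intro!: continuous_intros)
  qed (use \<open>0 \<le> R\<close> in simp)
  have "(LINT y:{-R..R}|lborel. conv_E g y) = (LBINT s. E s * (G (R - s) - G (- R - s)))"
    using set_integral_conv_E[OF _ bound, where a="- R" and b=R] shifted by simp
  moreover have "(LINT y:{-R..R}|lborel. g y) = (LBINT s. E s * (G R - G (- R)))"
    using set_integral_Icc_antiderivative[OF _ G cont] \<open>0 \<le> R\<close> by simp
  moreover have "\<bar>G (R - s) - G (- R - s)\<bar> \<le> B * \<bar>2 * R\<bar>" for s
    using DERIV_bounded_imp_lipschitz[OF G bound, of "R - s" "- R - s"] by simp
  then have "integrable lborel (\<lambda>s. E s * (G (R - s) - G (- R - s)))"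
    by (intro integrable_E_mult_bounded) (measurable, blast)
  ultimately show ?thesis
    unfolding conv_E_defect_def by (simp add: integrable_E right_diff_distrib)
qed

lemma abs_conv_E_defect_le:
  fixes g :: "real \<Rightarrow> real"
  assumes cont: "continuous_on UNIV g" and bound: "\<And>x. \<bar>g x\<bar> \<le> B" and "0 \<le> R"
  shows "\<bar>conv_E_defect g R\<bar> \<le> 2 * B * (LBINT s. \<bar>s\<bar> * E s)"
proof -
  obtain G where G: "\<And>x. (G has_real_derivative g x) (at x)"
    using exists_antiderivative[OF cont] by blast
  then have [measurable]: "G \<in> borel_measurable borel"
    using DERIV_continuous_on[of UNIV G g] by (auto intro: borel_measurable_continuous_onI)
  have growth: "\<bar>(G R - G (- R)) - (G (R - s) - G (- R - s))\<bar> \<le> 2 * B * \<bar>s\<bar>" for s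
    using DERIV_bounded_imp_lipschitz[OF G bound, of R "R - s"]
      DERIV_bounded_imp_lipschitz[OF G bound, of "- R" "- R - s"] by simp
  show ?thesis
    unfolding conv_E_defect_eq[OF cont bound G \<open>0 \<le> R\<close>]
    by (rule abs_integral_E_mult_le[OF _ growth]) measurable
qed

lemma abs_increment_remainder_le:
  fixes G g :: "real \<Rightarrow> real"
  assumes G: "\<And>x. (G has_real_derivative g x) (at x)" and bound: "\<And>x. \<bar>g x\<bar> \<le> B"
  shows "\<bar>G x - G (x - s) - s * g x\<bar> \<le> 2 * B * \<bar>s\<bar>"
proof -
  have "\<bar>G x - G (x - s) - s * g x\<bar> \<le> \<bar>G x - G (x - s)\<bar> + \<bar>s * g x\<bar>"
    by (rule abs_triangle_ineq4)
  moreover have "\<bar>G x - G (x - s)\<bar> \<le> B * \<bar>s\<bar>"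
    using DERIV_bounded_imp_lipschitz[OF G bound, of x "x - s"] by simp
  moreover have "\<bar>s * g x\<bar> \<le> B * \<bar>s\<bar>"
    using mult_right_mono[OF bound abs_ge_zero, of x s] by (simp add: abs_mult mult.commute)
  ultimately show ?thesis
    by linarith
qed

lemma increment_remainder_second_order:
  fixes G g g' :: "real \<Rightarrow> real"
  assumes G: "\<And>x. (G has_real_derivative g x) (at x)" and g: "\<And>x. (g has_real_derivative g' x) (at x)"
  shows "\<exists>\<zeta>. \<bar>\<zeta> - x\<bar> \<le> \<bar>s\<bar> \<and> \<bar>G x - G (x - s) - s * g x\<bar> \<le> s\<^sup>2 * \<bar>g' \<zeta>\<bar>"
proof -
  obtain \<xi> where \<xi>: "\<bar>\<xi> - x\<bar> \<le> \<bar>s\<bar>" "G x - G (x - s) = s * g \<xi>"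
    using MVT_between[OF G, of x "x - s"] by auto
  obtain \<zeta> where \<zeta>: "\<bar>\<zeta> - x\<bar> \<le> \<bar>x - \<xi>\<bar>" "g x - g \<xi> = (x - \<xi>) * g' \<zeta>"
    using MVT_between[OF g, of x \<xi>] by blast
  have "G x - G (x - s) - s * g x = s * (g \<xi> - g x)"
    using \<xi>(2) by (simp add: right_diff_distrib)
  also have "\<dots> = s * ((\<xi> - x) * g' \<zeta>)"
    using \<zeta>(2) by (metis minus_diff_eq mult_minus_left)
  finally have "\<bar>G x - G (x - s) - s * g x\<bar> = \<bar>s\<bar> * \<bar>\<xi> - x\<bar> * \<bar>g' \<zeta>\<bar>"
    by (simp add: abs_mult)
  also have "\<dots> \<le> \<bar>s\<bar> * \<bar>s\<bar> * \<bar>g' \<zeta>\<bar>"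
    using \<xi>(1) by (intro mult_right_mono mult_left_mono) auto
  finally show ?thesis
    using \<zeta>(1) \<xi>(1) by (intro exI[of _ \<zeta>]) (auto simp: power2_eq_square abs_mult[symmetric])
qed

lemma increment_remainder_tendsto_0:
  fixes G g g' :: "real \<Rightarrow> real"
  assumes G: "\<And>x. (G has_real_derivative g x) (at x)" and g: "\<And>x. (g has_real_derivative g' x) (at x)"
    and "(g' \<longlongrightarrow> 0) at_infinity"
  shows "((\<lambda>x. G x - G (x - s) - s * g x) \<longlongrightarrow> 0) at_infinity"
proof (rule tendstoI)
  fix \<epsilon> :: real
  assume "0 < \<epsilon>"
  have "\<forall>\<^sub>F x in at_infinity. dist (g' x) 0 < \<epsilon> / (s\<^sup>2 + 1)"
    using \<open>0 < \<epsilon>\<close> by (intro tendstoD[OF \<open>(g' \<longlongrightarrow> 0) at_infinity\<close>]) (simp add: add_nonneg_pos)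
  then obtain N where N: "\<And>x. N \<le> \<bar>x\<bar> \<Longrightarrow> \<bar>g' x\<bar> < \<epsilon> / (s\<^sup>2 + 1)"
    unfolding eventually_at_infinity by auto
  show "\<forall>\<^sub>F x in at_infinity. dist (G x - G (x - s) - s * g x) 0 < \<epsilon>"
    unfolding eventually_at_infinity
  proof (intro exI allI impI)
    fix x :: real
    assume "N + \<bar>s\<bar> \<le> norm x"
    obtain \<zeta> where \<zeta>: "\<bar>\<zeta> - x\<bar> \<le> \<bar>s\<bar>" "\<bar>G x - G (x - s) - s * g x\<bar> \<le> s\<^sup>2 * \<bar>g' \<zeta>\<bar>"
      using increment_remainder_second_order[OF G g] by blast
    have "N \<le> \<bar>\<zeta>\<bar>"
      using \<zeta>(1) \<open>N + \<bar>s\<bar> \<le> norm x\<close> abs_triangle_ineq2[of x \<zeta>] abs_minus_commute[of x \<zeta>]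
      by (simp only: real_norm_def)
    then have "s\<^sup>2 * \<bar>g' \<zeta>\<bar> \<le> s\<^sup>2 * (\<epsilon> / (s\<^sup>2 + 1))"
      using N[of \<zeta>] by (intro mult_left_mono) auto
    also have "\<dots> < \<epsilon>"
      using \<open>0 < \<epsilon>\<close> by (simp add: field_simps add_pos_nonneg)
    finally show "dist (G x - G (x - s) - s * g x) 0 < \<epsilon>"
      using \<zeta>(2) by simp
  qed
qed

text \<open>Since \<open>E\<close> is even, the first-order parts of the increments integrate to zero.\<close>

lemma conv_E_defect_eq_remainders:
  fixes g G :: "real \<Rightarrow> real"
  assumes cont: "continuous_on UNIV g" and bound: "\<And>x. \<bar>g x\<bar> \<le> B"
    and G: "\<And>x. (G has_real_derivative g x) (at x)" and "0 \<le> R"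
  shows "conv_E_defect g R
    = (LBINT s. E s * ((G R - G (R - s) - s * g R) - (G (- R) - G (- R - s) - s * g (- R))))"
proof -
  have [measurable]: "g \<in> borel_measurable borel" "G \<in> borel_measurable borel"
    using cont DERIV_continuous_on[of UNIV G g] G by (auto intro: borel_measurable_continuous_onI)
  have "\<bar>(G R - G (R - s) - s * g R) - (G (- R) - G (- R - s) - s * g (- R))\<bar> \<le> 4 * B * \<bar>s\<bar>" for s
    using abs_increment_remainder_le[OF G bound, of R s] abs_increment_remainder_le[OF G bound, of "- R" s]
    by linarith
  then have "integrable lborel
      (\<lambda>s. E s * ((G R - G (R - s) - s * g R) - (G (- R) - G (- R - s) - s * g (- R))))"
    by (intro integrable_E_mult_linear_growth) (measurable, blast)
  moreover have "(\<lambda>s. E s * ((G R - G (- R)) - (G (R - s) - G (- R - s))))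
      = (\<lambda>s. (s * E s) * (g R - g (- R))
          + E s * ((G R - G (R - s) - s * g R) - (G (- R) - G (- R - s) - s * g (- R))))"
    by (auto simp: fun_eq_iff algebra_simps)
  ultimately show ?thesis
    unfolding conv_E_defect_eq[OF cont bound G \<open>0 \<le> R\<close>]
    by (simp add: integrable_times_E integral_times_E)
qed

lemma conv_E_defect_tendsto_0:
  fixes g g' :: "real \<Rightarrow> real"
  assumes g: "\<And>x. (g has_real_derivative g' x) (at x)" and bound: "\<And>x. \<bar>g x\<bar> \<le> B"
    and "(g' \<longlongrightarrow> 0) at_infinity"
  shows "(conv_E_defect g \<longlongrightarrow> 0) at_top"
proof -
  have cont: "continuous_on UNIV g"
    using DERIV_continuous_on[of UNIV g g'] g by auto
  obtain G where G: "\<And>x. (G has_real_derivative g x) (at x)"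
    using exists_antiderivative[OF cont] by blast
  have [measurable]: "g \<in> borel_measurable borel" "G \<in> borel_measurable borel"
    using cont DERIV_continuous_on[of UNIV G g] G by (auto intro: borel_measurable_continuous_onI)
  define \<rho> where "\<rho> x s = G x - G (x - s) - s * g x" for x s
  have "((\<lambda>R. LBINT s. E s * (\<rho> R s - \<rho> (- R) s)) \<longlongrightarrow> (LBINT s::real. (0::real))) at_top"
  proof (rule integral_dominated_convergence_at_top[where M=lborel and f="\<lambda>s. 0"
        and s="\<lambda>R s. E s * (\<rho> R s - \<rho> (- R) s)" and w="\<lambda>s. 4 * B * (\<bar>s\<bar> * E s)"])
    show "(\<lambda>s. E s * (\<rho> R s - \<rho> (- R) s)) \<in> borel_measurable lborel" for R
      unfolding \<rho>_def by measurable
    show "integrable lborel (\<lambda>s. 4 * B * (\<bar>s\<bar> * E s))"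
      by (intro integrable_mult_right integrable_abs_times_E)
    have "\<bar>\<rho> R s - \<rho> (- R) s\<bar> \<le> 4 * B * \<bar>s\<bar>" for R s
      using abs_increment_remainder_le[OF G bound, of R s] abs_increment_remainder_le[OF G bound, of "- R" s]
      unfolding \<rho>_def by linarith
    from mult_left_mono[OF this E_nonneg]
    show "\<forall>\<^sub>F R in at_top. AE s in lborel. norm (E s * (\<rho> R s - \<rho> (- R) s)) \<le> 4 * B * (\<bar>s\<bar> * E s)"
      by (simp add: abs_mult E_nonneg mult_ac)
    have lim: "((\<lambda>R. \<rho> R s) \<longlongrightarrow> 0) at_top" "((\<lambda>R. \<rho> (- R) s) \<longlongrightarrow> 0) at_top" for s
      using increment_remainder_tendsto_0[OF G g \<open>(g' \<longlongrightarrow> 0) at_infinity\<close>, of s]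
      unfolding \<rho>_def[abs_def]
      by (auto intro: tendsto_mono[OF at_top_le_at_infinity] tendsto_at_infinity_reflect)
    have "((\<lambda>R. E s * (\<rho> R s - \<rho> (- R) s)) \<longlongrightarrow> E s * (0 - 0)) at_top" for s
      by (intro tendsto_intros lim)
    then show "AE s in lborel. ((\<lambda>R. E s * (\<rho> R s - \<rho> (- R) s)) \<longlongrightarrow> 0) at_top"
      by simp
  qed simp
  moreover have "\<forall>\<^sub>F R in at_top. (LBINT s. E s * (\<rho> R s - \<rho> (- R) s)) = conv_E_defect g R"
    using eventually_ge_at_top[of 0]
    by eventually_elim (simp add: \<rho>_def conv_E_defect_eq_remainders[OF cont bound G])
  ultimately show ?thesis
    by (simp add: Lim_transform_eventually)
qed

lemma abs_power_diff_le:
  fixes a b T :: real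
  assumes "0 \<le> a" "a \<le> T" "0 \<le> b" "b \<le> T"
  shows "\<bar>a ^ n - b ^ n\<bar> \<le> n * T ^ (n - 1) * \<bar>a - b\<bar>"
proof -
  have "norm (a ^ n - b ^ n) \<le> n * T ^ (n - 1) * norm (a - b)"
  proof (rule field_differentiable_bound[where S="{0..T}" and f'="\<lambda>x. n * x ^ (n - 1)"])
    show "((\<lambda>x. x ^ n) has_field_derivative n * x ^ (n - 1)) (at x within {0..T})" for x :: real
      by (auto intro!: derivative_eq_intros)
    show "norm (n * x ^ (n - 1)) \<le> n * T ^ (n - 1)" if "x \<in> {0..T}" for x :: real
      using that by (auto simp: abs_mult intro!: mult_left_mono power_mono)
  qed (use assms in auto)
  then show ?thesis
    by simp
qed

locale nonlocal_wave =
  fixes f f' f'' :: "real \<Rightarrow> real" and c lam T :: real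
  assumes c_pos: "0 < c" and lam_pos: "0 < lam"
    and f_bounds: "\<And>y. lam \<le> f y \<and> f y \<le> T"
    and f_deriv: "\<And>y. (f has_real_derivative f' y) (at y)"
    and f'_deriv: "\<And>y. (f' has_real_derivative f'' y) (at y)"
    and f''_cont: "continuous_on UNIV f''"
    and wave_eq: "\<And>y. f'' y - c * f' y = f y ^ 4 - conv_E (\<lambda>x. f x ^ 4) y"
begin

lemma f_pos: "0 < f y"
  using lam_pos f_bounds[of y] by linarith

lemma T_pos: "0 < T"
  using f_pos[of 0] f_bounds[of 0] by linarith

lemma f_cont: "continuous_on UNIV f" and f'_cont: "continuous_on UNIV f'"
  using DERIV_continuous_on[of UNIV f f'] DERIV_continuous_on[of UNIV f' f''] f_deriv f'_deriv by auto

lemma f_measurable [measurable]: "f \<in> borel_measurable borel"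
  using f_cont by (rule borel_measurable_continuous_onI)

lemma abs_f_power_le: "\<bar>f y ^ n\<bar> \<le> T ^ n"
  using f_pos[of y] f_bounds[of y] by (simp add: power_mono)

lemma abs_damping_le: "\<bar>f'' y - c * f' y\<bar> \<le> T ^ 4"
proof -
  have bound: "\<bar>f x ^ 4\<bar> \<le> T ^ 4" for x
    by (rule abs_f_power_le)
  have nonneg: "0 \<le> f x ^ 4" for x
    using f_pos[of x] by simp
  have measurable: "(\<lambda>x. f x ^ 4) \<in> borel_measurable borel"
    by measurable
  have "0 \<le> conv_E (\<lambda>x. f x ^ 4) y"
    by (rule conv_E_ge[OF measurable bound nonneg])
  moreover have "conv_E (\<lambda>x. f x ^ 4) y \<le> T ^ 4"
    by (rule conv_E_le[OF measurable bound abs_le_D1[OF bound]])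
  moreover have "0 \<le> f y ^ 4" and "f y ^ 4 \<le> T ^ 4"
    using abs_f_power_le[of y 4] by auto
  ultimately show ?thesis
    unfolding wave_eq by linarith
qed

lemma abs_f'_le: "\<bar>f' y\<bar> \<le> T ^ 4 / c"
  using f_deriv f'_deriv c_pos abs_damping_le f_bounds by (rule abs_damped_deriv_le)

lemma abs_f''_le: "\<bar>f'' y\<bar> \<le> 2 * T ^ 4"
  using abs_damping_le[of y] abs_f'_le[of y] c_pos by (simp add: abs_le_iff field_simps)

lemma f'_lipschitz: "\<bar>f' x - f' y\<bar> \<le> 2 * T ^ 4 * \<bar>x - y\<bar>"
  using f'_deriv abs_f''_le by (rule DERIV_bounded_imp_lipschitz)

definition dissipation :: "real \<Rightarrow> real" where
  "dissipation y = 4 * f y ^ 3 * (f' y)\<^sup>2"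

definition flux :: "real \<Rightarrow> real" where
  "flux y = f' y * f y ^ 4 - c / 5 * f y ^ 5"

lemma dissipation_cont: "continuous_on UNIV dissipation"
  unfolding dissipation_def by (intro continuous_intros f_cont f'_cont)

lemma dissipation_ge: "4 * lam ^ 3 * (f' y)\<^sup>2 \<le> dissipation y"
  using f_bounds[of y] lam_pos unfolding dissipation_def
  by (intro mult_right_mono mult_left_mono power_mono) auto

lemma abs_flux_le: "\<bar>flux y\<bar> \<le> T ^ 4 / c * T ^ 4 + c / 5 * T ^ 5"
proof -
  have "\<bar>f' y * f y ^ 4\<bar> \<le> T ^ 4 / c * T ^ 4"
    unfolding abs_mult using c_pos T_pos by (intro mult_mono abs_f'_le abs_f_power_le) auto
  moreover have "\<bar>c / 5 * f y ^ 5\<bar> \<le> c / 5 * T ^ 5"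
    unfolding abs_mult using abs_f_power_le[of y 5] c_pos by (simp add: abs_of_pos mult_left_mono)
  ultimately show ?thesis
    unfolding flux_def by linarith
qed

lemma flux_deriv: "(flux has_real_derivative (f'' y - c * f' y) * f y ^ 4 + dissipation y) (at y)"
proof -
  have "(flux has_real_derivative
      f'' y * f y ^ 4 + f' y * (4 * f y ^ 3 * f' y) - c / 5 * (5 * f y ^ 4 * f' y)) (at y)"
    unfolding flux_def[abs_def] by (auto intro!: derivative_eq_intros f_deriv f'_deriv)
  then show ?thesis
    by (simp add: dissipation_def power2_eq_square algebra_simps)
qed

lemma damping_times_f4_ge:
  "((f y ^ 4)\<^sup>2 - conv_E (\<lambda>x. (f x ^ 4)\<^sup>2) y) / 2 \<le> (f'' y - c * f' y) * f y ^ 4"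
proof -
  have "f y ^ 4 * conv_E (\<lambda>x. f x ^ 4) y \<le> ((f y ^ 4)\<^sup>2 + conv_E (\<lambda>x. (f x ^ 4)\<^sup>2) y) / 2"
    by (rule mult_conv_E_le[OF _ abs_f_power_le]) measurable
  moreover have "(f'' y - c * f' y) * f y ^ 4 = (f y ^ 4)\<^sup>2 - f y ^ 4 * conv_E (\<lambda>x. f x ^ 4) y"
    unfolding wave_eq by (simp add: power2_eq_square algebra_simps)
  ultimately show ?thesis
    by argo
qed

lemma dissipation_increment_le:
  assumes Q: "\<And>x. (Q has_real_derivative dissipation x) (at x)" and "0 \<le> R"
  shows "Q R - Q (- R) \<le> flux R - flux (- R) - conv_E_defect (\<lambda>x. (f x ^ 4)\<^sup>2) R / 2"
proof -
  let ?h2 = "\<lambda>x. (f x ^ 4)\<^sup>2" and ?damp = "\<lambda>y. (f'' y - c * f' y) * f y ^ 4"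
  have cont: "continuous_on UNIV ?h2" "continuous_on UNIV ?damp" "continuous_on UNIV dissipation"
    by (intro continuous_intros f_cont f'_cont f''_cont dissipation_cont)+
  have h2_bound: "\<bar>(f x ^ 4)\<^sup>2\<bar> \<le> (T ^ 4)\<^sup>2" for x
    using abs_f_power_le[of x 8] by (simp flip: power_mult)
  have conv_int: "set_integrable lborel {-R..R} (conv_E ?h2)"
    using h2_bound by (intro set_integrable_conv_E) auto
  have "Q R - Q (- R) = (LINT y:{-R..R}|lborel. dissipation y)"
    using \<open>0 \<le> R\<close> Q cont(3) by (intro set_integral_Icc_antiderivative[symmetric]) auto
  moreover have "(LINT y:{-R..R}|lborel. ?damp y + dissipation y) = flux R - flux (- R)"
    using \<open>0 \<le> R\<close> flux_deriv by (intro set_integral_Icc_antiderivative) (auto intro!: continuous_intros cont)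
  moreover have "(LINT y:{-R..R}|lborel. ?damp y + dissipation y)
      = (LINT y:{-R..R}|lborel. ?damp y) + (LINT y:{-R..R}|lborel. dissipation y)"
    using cont by (intro set_integral_add set_integrable_Icc_continuous)
  moreover have "conv_E_defect ?h2 R / 2 = (LINT y:{-R..R}|lborel. (?h2 y - conv_E ?h2 y) / 2)"
    using set_integrable_Icc_continuous[OF cont(1)] conv_int
    by (simp add: conv_E_defect_def set_integral_diff set_integral_divide_zero)
  moreover have "\<dots> \<le> (LINT y:{-R..R}|lborel. ?damp y)"
    using set_integrable_Icc_continuous[OF cont(1)] set_integrable_Icc_continuous[OF cont(2)] conv_int
    by (intro set_integral_mono damping_times_f4_ge set_integrable_divide set_integral_diff)
  ultimately show ?thesis
    by linarith
qed

lemma f'_tendsto_0: "(f' \<longlongrightarrow> 0) at_infinity"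
proof -
  obtain Q where Q: "\<And>x. (Q has_real_derivative dissipation x) (at x)"
    using exists_antiderivative[OF dissipation_cont] by blast
  define C where "C = 2 * (T ^ 4 / c * T ^ 4 + c / 5 * T ^ 5) + (T ^ 4)\<^sup>2 * (LBINT s. \<bar>s\<bar> * E s)"
  have "Q R - Q (- R) \<le> C" if "0 \<le> R" for R
  proof -
    have "\<bar>conv_E_defect (\<lambda>x. (f x ^ 4)\<^sup>2) R\<bar> \<le> 2 * (T ^ 4)\<^sup>2 * (LBINT s. \<bar>s\<bar> * E s)"
      using abs_f_power_le[of _ 8] that
      by (intro abs_conv_E_defect_le) (auto intro!: continuous_intros f_cont simp flip: power_mult)
    then show ?thesis
      using dissipation_increment_le[OF Q that] abs_flux_le[of R] abs_flux_le[of "- R"]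
      unfolding C_def by (simp add: abs_le_iff)
  qed
  then show ?thesis
    using T_pos lam_pos
    by (intro tendsto_0_if_bounded_dissipation[OF f'_lipschitz _ Q dissipation_ge]) auto
qed

lemma f'_tendsto_0_at_top: "(f' \<longlongrightarrow> 0) at_top" and f'_reflect_tendsto_0: "((\<lambda>R. f' (- R)) \<longlongrightarrow> 0) at_top"
  using f'_tendsto_0 by (auto intro: tendsto_mono[OF at_top_le_at_infinity] tendsto_at_infinity_reflect)

lemma f_power_deriv_tendsto_0:
  "((\<lambda>x. of_nat n * f x ^ (n - 1) * f' x) \<longlongrightarrow> 0) at_infinity"
proof (rule tendsto_0_le[OF f'_tendsto_0])
  have "\<bar>of_nat n * f x ^ (n - 1) * f' x\<bar> \<le> \<bar>f' x\<bar> * (n * T ^ (n - 1))" for x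
    using abs_f_power_le[of x "n - 1"] by (simp add: abs_mult mult_ac mult_left_mono mult_right_mono)
  then show "\<forall>\<^sub>F x in at_infinity. norm (of_nat n * f x ^ (n - 1) * f' x) \<le> norm (f' x) * (n * T ^ (n - 1))"
    by simp
qed

lemma f_reflect_diff_tendsto_0: "((\<lambda>R. f R - f (- R)) \<longlongrightarrow> 0) at_top"
proof -
  have integrated: "(f' R - c * f R) - (f' (- R) - c * f (- R)) = conv_E_defect (\<lambda>x. f x ^ 4) R"
    if "0 \<le> R" for R
  proof -
    have "(LINT y:{-R..R}|lborel. f'' y - c * f' y) = (f' R - c * f R) - (f' (- R) - c * f (- R))"
      using that
      by (intro set_integral_Icc_antiderivative)
         (auto intro!: derivative_eq_intros f_deriv f'_deriv continuous_intros f'_cont f''_cont)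
    moreover have "(LINT y:{-R..R}|lborel. f'' y - c * f' y) = conv_E_defect (\<lambda>x. f x ^ 4) R"
    proof -
      have "set_integrable lborel {-R..R} (\<lambda>x. f x ^ 4)"
        by (intro set_integrable_Icc_continuous continuous_intros f_cont)
      moreover have "set_integrable lborel {-R..R} (conv_E (\<lambda>x. f x ^ 4))"
        by (rule set_integrable_conv_E[OF _ abs_f_power_le]) measurable
      ultimately show ?thesis
        by (simp add: wave_eq conv_E_defect_def set_integral_diff)
    qed
    ultimately show ?thesis
      by simp
  qed
  have "(conv_E_defect (\<lambda>x. f x ^ 4) \<longlongrightarrow> 0) at_top"
    by (rule conv_E_defect_tendsto_0[OF _ abs_f_power_le f_power_deriv_tendsto_0[of 4]])
       (auto intro!: derivative_eq_intros f_deriv)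
  then have "((\<lambda>R. ((f' R - f' (- R)) - conv_E_defect (\<lambda>x. f x ^ 4) R) / c) \<longlongrightarrow> ((0 - 0) - 0) / c) at_top"
    using c_pos by (intro tendsto_intros f'_tendsto_0_at_top f'_reflect_tendsto_0) auto
  moreover have "\<forall>\<^sub>F R in at_top. ((f' R - f' (- R)) - conv_E_defect (\<lambda>x. f x ^ 4) R) / c = f R - f (- R)"
    using eventually_ge_at_top[of 0]
    by eventually_elim (use integrated c_pos in \<open>auto simp: field_simps\<close>)
  ultimately show ?thesis
    by (simp add: Lim_transform_eventually)
qed

lemma flux_reflect_diff_tendsto_0: "((\<lambda>R. flux R - flux (- R)) \<longlongrightarrow> 0) at_top"
proof -
  have bound: "norm (f' x * f x ^ 4) \<le> norm (f' x) * T ^ 4" for x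
    using mult_left_mono[OF abs_f_power_le[of x 4] abs_ge_zero[of "f' x"]] by (simp add: abs_mult)
  have f'_f4: "((\<lambda>R. f' R * f R ^ 4) \<longlongrightarrow> 0) at_top" "((\<lambda>R. f' (- R) * f (- R) ^ 4) \<longlongrightarrow> 0) at_top"
    by (rule tendsto_0_le[OF f'_tendsto_0_at_top always_eventually]
          tendsto_0_le[OF f'_reflect_tendsto_0 always_eventually], use bound in blast)+
  have "\<bar>f R ^ 5 - f (- R) ^ 5\<bar> \<le> \<bar>f R - f (- R)\<bar> * (5 * T ^ 4)" for R
    using abs_power_diff_le[of "f R" T "f (- R)" 5] f_bounds[of R] f_bounds[of "- R"]
      f_pos[of R] f_pos[of "- R"]
    by (simp add: mult_ac less_imp_le)
  then have "((\<lambda>R. f R ^ 5 - f (- R) ^ 5) \<longlongrightarrow> 0) at_top"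
    by (intro tendsto_0_le[OF f_reflect_diff_tendsto_0, where K="5 * T ^ 4"] always_eventually allI) simp
  from tendsto_diff[OF tendsto_diff[OF f'_f4] tendsto_mult_right_zero[OF this, of "c / 5"]]
  show ?thesis
    by (simp add: flux_def algebra_simps)
qed

lemma f'_eq_0: "f' y = 0"
proof -
  obtain Q where Q: "\<And>x. (Q has_real_derivative dissipation x) (at x)"
    using exists_antiderivative[OF dissipation_cont] by blast
  have "norm (of_nat 2 * (f x ^ 4) ^ (2 - 1) * v) \<le> norm v * (2 * T ^ 4)" for x v
    using mult_left_mono[OF abs_f_power_le[of x 4] abs_ge_zero[of v]] by (simp add: abs_mult mult_ac)
  then have "((\<lambda>x. of_nat 2 * (f x ^ 4) ^ (2 - 1) * (of_nat 4 * f x ^ (4 - 1) * f' x)) \<longlongrightarrow> 0) at_infinity"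
    by (intro tendsto_0_le[OF f_power_deriv_tendsto_0[of 4] always_eventually] allI)
  then have "(conv_E_defect (\<lambda>x. (f x ^ 4)\<^sup>2) \<longlongrightarrow> 0) at_top"
    using abs_f_power_le[of _ 8]
    by (intro conv_E_defect_tendsto_0) (auto intro!: derivative_eq_intros f_deriv simp flip: power_mult)
  then have "((\<lambda>R. flux R - flux (- R) - conv_E_defect (\<lambda>x. (f x ^ 4)\<^sup>2) R / 2) \<longlongrightarrow> 0 - 0 / 2) at_top"
    by (intro tendsto_intros flux_reflect_diff_tendsto_0) auto
  then show ?thesis
    using lam_pos
    by (intro eq_0_if_vanishing_dissipation[OF Q dissipation_ge _ dissipation_increment_le[OF Q]]) auto
qed

end

theorem theorem3p6:
  fixes f :: "real \<Rightarrow> real" and c lam T_M :: real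
  assumes "c > 0" and "0 < lam" and "lam < T_M"
    and "\<forall>y. f differentiable (at y)"
    and "\<forall>y. deriv f differentiable (at y)"
    and "continuous_on UNIV (deriv (deriv f))"
    and "\<forall>y. deriv (deriv f) y - c * deriv f y - f y ^ 4
               = - (LINT \<eta>|lborel. E (y - \<eta>) * f \<eta> ^ 4)"
    and "\<forall>y. lam \<le> f y \<and> f y \<le> T_M"
  shows "\<exists>C. \<forall>y. f y = C"
proof -
  interpret nonlocal_wave f "deriv f" "deriv (deriv f)" c lam T_M
  proof
    show "(f has_real_derivative deriv f y) (at y)"
      and "(deriv f has_real_derivative deriv (deriv f) y) (at y)" for y
      using assms(4,5) by (simp_all add: DERIV_deriv_iff_real_differentiable)
    show "deriv (deriv f) y - c * deriv f y = f y ^ 4 - conv_E (\<lambda>x. f x ^ 4) y" for y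
      using assms(7)[rule_format, of y] conv_E_eq[of y "\<lambda>x. f x ^ 4"] by (simp add: algebra_simps)
  qed (use assms in auto)
  have "(f has_real_derivative 0) (at y)" for y
    using f_deriv[of y] by (simp add: f'_eq_0)
  then show ?thesis
    using DERIV_isconst_all by blast
qed

end
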